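(* Consider the augmented LSTM model and the observer described in the context, driven by inputs $u_k\in\mathcal{U}$ and by the measured output $y_k=W_yh_k+b_y+d_k$ of the augmented model. If $h_k\in\mathcal{H}$ and $d_k\in\mathcal{D}$ for all $k\ge0$, then the set $\hat{\mathcal{I}}=\hat{\mathcal{C}}\times\mathcal{H}\times\mathcal{D}$, with $\hat{\mathcal{C}}=\{\hat c\in\mathbb{R}^n:\|\hat c\|_\infty\le \hat{\bar\sigma}^i\bar\sigma^c/(1-\hat{\bar\sigma}^f)\}$, is positively invariant for the observer state $\hat\chi=[\hat c^\top\ \hat h^\top\ \hat d^\top]^\top$.
   Context: Augmented LSTM model ($c,h\in\mathbb{R}^n$, $u\in\mathbb{R}^m$, $d,w,y\in\mathbb{R}^p$): $c_{k+1}=\sigma(W_fu_k+U_fh_k+b_f)\circ c_k+\sigma(W_iu_k+U_ih_k+b_i)\circ\tanh(W_cu_k+U_ch_k+b_c)$, $h_{k+1}=\sigma(W_ou_k+U_oh_k+b_o)\circ\tanh(c_{k+1})$, $d_{k+1}=d_k+w_k$, $y_k=W_yh_k+b_y+d_k$; $\sigma$ the logistic sigmoid, activations elementwise, $\circ$ elementwise product. $\mathcal{U}=\{u:\|u\|_\infty\le u_{max}\}$, $\mathcal{H}=\{h:\|h\|_\infty\le1\}$, $\mathcal{D}=\{d:\|d\|_\infty\le d_{max}\}$. Observer with gains $L_f,L_i,L_o\in\mathbb{R}^{n\times p}$, $L_d\in\mathbb{R}^{p\times p}$: $\hat c_{k+1}=\sigma(W_fu_k+U_f\hat h_k+b_f+L_f(y_k-\hat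 y_k))\circ\hat c_k+\sigma(W_iu_k+U_i\hat h_k+b_i+L_i(y_k-\hat y_k))\circ\tanh(W_cu_k+U_c\hat h_k+b_c)$, $\hat h_{k+1}=\sigma(W_ou_k+U_o\hat h_k+b_o+L_o(y_k-\hat y_k))\circ\tanh(\hat c_{k+1})$, $\hat d_{k+1}=\mathrm{sat}(\hat d_k+L_d(y_k-\hat y_k),d_{max})$, $\hat y_k=W_y\hat h_k+b_y+\hat d_k$, where $\mathrm{sat}(v,v_{max})$ saturates each component to $[-v_{max},v_{max}]$. With $\|\cdot\|_\infty$ the induced $\infty$-norm of horizontally concatenated blocks: $\bar\sigma^c=\tanh(\|[W_cu_{max}\ U_c\ b_c]\|_\infty)$, $\hat{\bar\sigma}^f=\sigma(\|[W_fu_{max},\ U_f-L_fW_y,\ b_f,\ L_fW_y,\ 2L_fd_{max}]\|_\infty)$, $\hat{\bar\sigma}^i=\sigma(\|[W_iu_{max},\ U_i-L_iW_y,\ b_i,\ L_iW_y,\ 2L_id_{max}]\|_\infty)$. *)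

theory Defs
  imports "HOL-Analysis.Analysis"
begin

text \<open>Vectors in R^n are real^'n, matrices in R^{n x m} are real^'m^'n (rows indexed by 'n).\<close>

definition sigmoid :: "real \<Rightarrow> real" where
  "sigmoid x = 1 / (1 + exp (- x))"

definition vmap :: "(real \<Rightarrow> real) \<Rightarrow> real^'n \<Rightarrow> real^'n" where
  "vmap f v = (\<chi> i. f (v $ i))"

definition hprod :: "real^'n \<Rightarrow> real^'n \<Rightarrow> real^'n" (infixl "\<circ>\<^sub>v" 70) where
  "x \<circ>\<^sub>v y = (\<chi> i. x $ i * y $ i)"

definition sat :: "real^'n \<Rightarrow> real \<Rightarrow> real^'n" where
  "sat v vmax = (\<chi> i. max (- vmax) (min vmax (v $ i)))"

definition hcat :: "real^'a^'r \<Rightarrow> real^'b^'r \<Rightarrow> real^('a + 'b)^'r" where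
  "hcat A B = (\<chi> i. \<chi> j. (case j of Inl a \<Rightarrow> A $ i $ a | Inr b \<Rightarrow> B $ i $ b))"

definition col :: "real^'r \<Rightarrow> real^1^'r" where
  "col v = (\<chi> i. \<chi> j. v $ i)"

definition mat_infnorm :: "real^'c^'r \<Rightarrow> real" where
  "mat_infnorm A = Max (range (\<lambda>i. \<Sum>j\<in>UNIV. \<bar>A $ i $ j\<bar>))"

end

theory Submission
  imports Defs
begin

text \<open>Every gate pre-activation of the observer is a sum of matrix-vector products whose arguments
  are bounded in the \<open>\<infinity>\<close>-norm on the candidate invariant set: \<open>\<parallel>u\<parallel> \<le> u\<^sub>m\<^sub>a\<^sub>x\<close>,
  \<open>\<parallel>h\<parallel>, \<parallel>\<hat>h\<parallel> \<le> 1\<close> and \<open>\<parallel>d - \<hat>d\<parallel> \<le> 2 d\<^sub>m\<^sub>a\<^sub>x\<close> once the output injection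
  \<open>L(y - \<hat>y) = L W\<^sub>y h - L W\<^sub>y \<hat>h + L(d - \<hat>d)\<close> is expanded. Hence each pre-activation is bounded
  componentwise by the induced norm of the concatenated matrix, and by monotonicity the forget
  and input gates stay below \<open>\<hat>\<sigma>\<^sup>f\<close>, \<open>\<hat>\<sigma>\<^sup>i\<close> and the candidate cell state below \<open>\<sigma>\<^sup>c\<close>. The
  cell update \<open>\<hat>c\<^sup>+ = f \<circ> \<hat>c + i \<circ> t\<close> then maps the ball of radius
  \<open>\<hat>\<sigma>\<^sup>i\<sigma>\<^sup>c/(1 - \<hat>\<sigma>\<^sup>f)\<close>, the fixed point of \<open>r \<mapsto> \<hat>\<sigma>\<^sup>f r + \<hat>\<sigma>\<^sup>i\<sigma>\<^sup>c\<close>, into itself,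
  the hidden state is a product of a sigmoid and a tanh, and the saturation keeps \<open>\<hat>d\<close> in
  \<open>\<D>\<close>; induction on time concludes.\<close>

lemma infnorm_le_cartI: "(\<And>i. \<bar>x $ i\<bar> \<le> M) \<Longrightarrow> infnorm (x::real^'n) \<le> M"
  unfolding infnorm_cart by (rule cSup_least) auto

lemma abs_component_le_of_infnorm_le: "infnorm (x::real^'n) \<le> M \<Longrightarrow> \<bar>x $ i\<bar> \<le> M"
  using component_le_infnorm_cart order_trans by blast

definition row_abs_sum :: "real^'c::finite^'r::finite \<Rightarrow> 'r \<Rightarrow> real" where
  "row_abs_sum A i = (\<Sum>j\<in>UNIV. \<bar>A $ i $ j\<bar>)"

lemma row_abs_sum_hcat: "row_abs_sum (hcat A B) i = row_abs_sum A i + row_abs_sum B i"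
proof -
  have "sum f (UNIV :: ('a::finite + 'b::finite) set) = sum (f \<circ> Inl) UNIV + sum (f \<circ> Inr) UNIV"
    for f :: "'a + 'b \<Rightarrow> real"
    by (metis UNIV_Plus_UNIV finite sum.Plus)
  then show ?thesis
    unfolding row_abs_sum_def hcat_def by (simp add: o_def)
qed

lemma row_abs_sum_col: "row_abs_sum (col v) i = \<bar>v $ i\<bar>"
  unfolding row_abs_sum_def col_def by simp

lemma row_abs_sum_scaleR: "row_abs_sum (c *\<^sub>R A) i = \<bar>c\<bar> * row_abs_sum A i"
  by (simp add: row_abs_sum_def abs_mult sum_distrib_left)

lemma row_abs_sum_le_mat_infnorm: "row_abs_sum A i \<le> mat_infnorm A"
  unfolding mat_infnorm_def row_abs_sum_def by (rule Max_ge) auto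

lemma abs_matrix_vector_mult_component_le:
  assumes "infnorm x \<le> M"
  shows "\<bar>(A *v x) $ i\<bar> \<le> row_abs_sum A i * M"
proof -
  have "\<bar>(A *v x) $ i\<bar> = \<bar>\<Sum>j\<in>UNIV. A $ i $ j * x $ j\<bar>"
    by (simp add: matrix_vector_mult_def)
  also have "\<dots> \<le> (\<Sum>j\<in>UNIV. \<bar>A $ i $ j\<bar> * M)"
    using abs_component_le_of_infnorm_le[OF assms]
    by (intro order_trans[OF sum_abs sum_mono]) (simp add: abs_mult mult_left_mono)
  also have "\<dots> = row_abs_sum A i * M"
    by (simp add: row_abs_sum_def sum_distrib_right)
  finally show ?thesis .
qed

lemma infnorm_affine_le_mat_infnorm_hcat:
  fixes W :: "real^'m::finite^'n::finite" and U :: "real^'k::finite^'n"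
  assumes "infnorm u \<le> u_max" and "infnorm x \<le> 1"
  shows "infnorm (W *v u + U *v x + b) \<le> mat_infnorm (hcat (hcat (u_max *\<^sub>R W) U) (col b))"
proof (rule infnorm_le_cartI)
  fix j
  have "0 \<le> u_max"
    using assms(1) infnorm_pos_le order_trans by blast
  have "\<bar>(W *v u + U *v x + b) $ j\<bar> \<le> \<bar>(W *v u) $ j\<bar> + \<bar>(U *v x) $ j\<bar> + \<bar>b $ j\<bar>"
    by simp
  also have "\<dots> \<le> row_abs_sum W j * u_max + row_abs_sum U j * 1 + \<bar>b $ j\<bar>"
    using abs_matrix_vector_mult_component_le[OF assms(1)] abs_matrix_vector_mult_component_le[OF assms(2)]
    by (intro add_mono) auto
  also have "\<dots> = row_abs_sum (hcat (hcat (u_max *\<^sub>R W) U) (col b)) j"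
    using \<open>0 \<le> u_max\<close> by (simp add: row_abs_sum_hcat row_abs_sum_col row_abs_sum_scaleR)
  finally show "\<bar>(W *v u + U *v x + b) $ j\<bar> \<le> mat_infnorm (hcat (hcat (u_max *\<^sub>R W) U) (col b))"
    using row_abs_sum_le_mat_infnorm order_trans by blast
qed

lemma output_injection_split:
  fixes W :: "real^'m::finite^'n::finite" and L :: "real^'p::finite^'n"
  shows "W *v u + U *v x + b + L *v ((W_y *v h + b_y + d) - (W_y *v x + b_y + dh))
   = W *v u + (U - L ** W_y) *v x + b + (L ** W_y) *v h + L *v (d - dh)"
  by (simp add: algebra_simps matrix_vector_mul_assoc[symmetric])

lemma infnorm_observer_gate_le:
  fixes W :: "real^'m::finite^'n::finite" and U :: "real^'k::finite^'n" and L :: "real^'p::finite^'n"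
    and W_y :: "real^'k^'p"
  assumes "infnorm u \<le> u_max" and "infnorm x \<le> 1" and "infnorm h \<le> 1"
    and "infnorm d \<le> d_max" and "infnorm dh \<le> d_max"
  shows "infnorm (W *v u + U *v x + b + L *v ((W_y *v h + b_y + d) - (W_y *v x + b_y + dh)))
    \<le> mat_infnorm (hcat (hcat (hcat (hcat (u_max *\<^sub>R W) (U - L ** W_y)) (col b)) (L ** W_y))
         ((2 * d_max) *\<^sub>R L))"
    (is "_ \<le> mat_infnorm ?A")
proof (rule infnorm_le_cartI)
  fix j
  have "0 \<le> u_max" "0 \<le> d_max"
    using assms(1,4) infnorm_pos_le order_trans by blast+
  have "infnorm (d - dh) \<le> 2 * d_max"
    using infnorm_triangle[of d "- dh"] assms(4,5) by (simp add: infnorm_neg)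
  have "\<bar>(W *v u + (U - L ** W_y) *v x + b + (L ** W_y) *v h + L *v (d - dh)) $ j\<bar>
     \<le> \<bar>(W *v u) $ j\<bar> + \<bar>((U - L ** W_y) *v x) $ j\<bar> + \<bar>b $ j\<bar> + \<bar>((L ** W_y) *v h) $ j\<bar>
        + \<bar>(L *v (d - dh)) $ j\<bar>"
    by simp
  also have "\<dots> \<le> row_abs_sum W j * u_max + row_abs_sum (U - L ** W_y) j * 1 + \<bar>b $ j\<bar>
        + row_abs_sum (L ** W_y) j * 1 + row_abs_sum L j * (2 * d_max)"
    using abs_matrix_vector_mult_component_le[OF assms(1)] abs_matrix_vector_mult_component_le[OF assms(2)]
      abs_matrix_vector_mult_component_le[OF assms(3)]
      abs_matrix_vector_mult_component_le[OF \<open>infnorm (d - dh) \<le> 2 * d_max\<close>]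
    by (intro add_mono) auto
  also have "\<dots> = row_abs_sum ?A j"
    using \<open>0 \<le> u_max\<close> \<open>0 \<le> d_max\<close> by (simp add: row_abs_sum_hcat row_abs_sum_col row_abs_sum_scaleR)
  finally show "\<bar>(W *v u + U *v x + b + L *v ((W_y *v h + b_y + d) - (W_y *v x + b_y + dh))) $ j\<bar>
      \<le> mat_infnorm ?A"
    unfolding output_injection_split using row_abs_sum_le_mat_infnorm order_trans by blast
qed

lemma sigmoid_pos: "0 < sigmoid x"
  unfolding sigmoid_def by (simp add: add_pos_pos)

lemma sigmoid_less_1: "sigmoid x < 1"
  unfolding sigmoid_def by (simp add: add_pos_pos)

lemma sigmoid_mono: "x \<le> y \<Longrightarrow> sigmoid x \<le> sigmoid y"
  unfolding sigmoid_def by (rule frac_le) (auto simp: add_pos_pos)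

lemma sigmoid_le_of_abs_le: "\<bar>x\<bar> \<le> M \<Longrightarrow> sigmoid x \<le> sigmoid M"
  by (rule sigmoid_mono) simp

lemma abs_tanh_le_of_abs_le: "\<bar>x\<bar> \<le> M \<Longrightarrow> \<bar>tanh (x::real)\<bar> \<le> tanh M"
  by (metis tanh_real_abs tanh_real_le_iff)

lemma abs_cell_update_le:
  fixes f i t c s_f s_i s_t :: real
  assumes "0 \<le> f" "f \<le> s_f" "s_f < 1" "0 \<le> i" "i \<le> s_i" "\<bar>t\<bar> \<le> s_t"
    and "\<bar>c\<bar> \<le> s_i * s_t / (1 - s_f)"
  shows "\<bar>f * c + i * t\<bar> \<le> s_i * s_t / (1 - s_f)"
proof -
  have "\<bar>f * c + i * t\<bar> \<le> f * \<bar>c\<bar> + i * \<bar>t\<bar>"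
    using assms(1,4) by (metis abs_mult abs_of_nonneg abs_triangle_ineq)
  also have "\<dots> \<le> s_f * (s_i * s_t / (1 - s_f)) + s_i * s_t"
    using assms by (intro add_mono mult_mono) auto
  also have "\<dots> = s_i * s_t / (1 - s_f)"
    using assms(3) by (simp add: field_simps)
  finally show ?thesis .
qed

lemma infnorm_lstm_cell_update_le:
  fixes a b x c :: "real^'n"
  assumes "infnorm a \<le> M_f" and "infnorm b \<le> M_i" and "infnorm x \<le> M_c"
    and "infnorm c \<le> sigmoid M_i * tanh M_c / (1 - sigmoid M_f)"
  shows "infnorm (vmap sigmoid a \<circ>\<^sub>v c + vmap sigmoid b \<circ>\<^sub>v vmap tanh x)
    \<le> sigmoid M_i * tanh M_c / (1 - sigmoid M_f)"
proof (rule infnorm_le_cartI)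
  fix j
  have "\<bar>a $ j\<bar> \<le> M_f" "\<bar>b $ j\<bar> \<le> M_i" "\<bar>x $ j\<bar> \<le> M_c" "\<bar>c $ j\<bar> \<le> infnorm c"
    using assms(1-3) by (auto intro: abs_component_le_of_infnorm_le component_le_infnorm_cart)
  then show "\<bar>(vmap sigmoid a \<circ>\<^sub>v c + vmap sigmoid b \<circ>\<^sub>v vmap tanh x) $ j\<bar>
      \<le> sigmoid M_i * tanh M_c / (1 - sigmoid M_f)"
    unfolding vmap_def hprod_def using assms(4)
    by (simp, intro abs_cell_update_le)
      (auto intro: less_imp_le sigmoid_pos sigmoid_less_1 sigmoid_le_of_abs_le abs_tanh_le_of_abs_le)
qed

lemma infnorm_lstm_hidden_le: "infnorm (vmap sigmoid a \<circ>\<^sub>v vmap tanh x) \<le> 1"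
proof (rule infnorm_le_cartI)
  fix j
  have "\<bar>sigmoid (a $ j)\<bar> \<le> 1" "\<bar>tanh (x $ j)\<bar> \<le> 1"
    using sigmoid_pos[of "a $ j"] sigmoid_less_1[of "a $ j"] tanh_real_bounds[of "x $ j"] by auto
  then show "\<bar>(vmap sigmoid a \<circ>\<^sub>v vmap tanh x) $ j\<bar> \<le> 1"
    unfolding vmap_def hprod_def by (simp add: abs_mult mult_le_one)
qed

lemma infnorm_sat_le: "0 \<le> v_max \<Longrightarrow> infnorm (sat v v_max) \<le> v_max"
  by (rule infnorm_le_cartI) (simp add: sat_def)

theorem lemma3:
  fixes W_f W_i W_c W_o :: "real^'m::finite^'n::finite"
    and U_f U_i U_c U_o :: "real^'n^'n"
    and b_f b_i b_c b_o :: "real^'n"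
    and W_y :: "real^'n^'p::finite" and b_y :: "real^'p"
    and L_f L_i L_o :: "real^'p^'n" and L_d :: "real^'p^'p"
    and u_max d_max :: real
    and u :: "nat \<Rightarrow> real^'m"
    and c h :: "nat \<Rightarrow> real^'n" and d w :: "nat \<Rightarrow> real^'p"
    and ch hh :: "nat \<Rightarrow> real^'n" and dh :: "nat \<Rightarrow> real^'p"
  defines "y \<equiv> (\<lambda>k. W_y *v h k + b_y + d k)"
    and "yh \<equiv> (\<lambda>k. W_y *v hh k + b_y + dh k)"
    and "sig_c \<equiv> tanh (mat_infnorm (hcat (hcat (u_max *\<^sub>R W_c) U_c) (col b_c)))"
    and "sig_f \<equiv> sigmoid (mat_infnorm (hcat (hcat (hcat (hcat (u_max *\<^sub>R W_f) (U_f - L_f ** W_y))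
                   (col b_f)) (L_f ** W_y)) ((2 * d_max) *\<^sub>R L_f)))"
    and "sig_i \<equiv> sigmoid (mat_infnorm (hcat (hcat (hcat (hcat (u_max *\<^sub>R W_i) (U_i - L_i ** W_y))
                   (col b_i)) (L_i ** W_y)) ((2 * d_max) *\<^sub>R L_i)))"
  assumes sys_c: "\<And>k. c (Suc k) =
      vmap sigmoid (W_f *v u k + U_f *v h k + b_f) \<circ>\<^sub>v c k
      + vmap sigmoid (W_i *v u k + U_i *v h k + b_i) \<circ>\<^sub>v vmap tanh (W_c *v u k + U_c *v h k + b_c)"
    and sys_h: "\<And>k. h (Suc k) = vmap sigmoid (W_o *v u k + U_o *v h k + b_o) \<circ>\<^sub>v vmap tanh (c (Suc k))"
    and sys_d: "\<And>k. d (Suc k) = d k + w k"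
    and obs_c: "\<And>k. ch (Suc k) =
      vmap sigmoid (W_f *v u k + U_f *v hh k + b_f + L_f *v (y k - yh k)) \<circ>\<^sub>v ch k
      + vmap sigmoid (W_i *v u k + U_i *v hh k + b_i + L_i *v (y k - yh k))
          \<circ>\<^sub>v vmap tanh (W_c *v u k + U_c *v hh k + b_c)"
    and obs_h: "\<And>k. hh (Suc k) =
      vmap sigmoid (W_o *v u k + U_o *v hh k + b_o + L_o *v (y k - yh k)) \<circ>\<^sub>v vmap tanh (ch (Suc k))"
    and obs_d: "\<And>k. dh (Suc k) = sat (dh k + L_d *v (y k - yh k)) d_max"
    and u_in: "\<And>k. infnorm (u k) \<le> u_max"
    and h_in: "\<And>k. infnorm (h k) \<le> 1"
    and d_in: "\<And>k. infnorm (d k) \<le> d_max"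
  shows "\<forall>k0. (infnorm (ch k0) \<le> sig_i * sig_c / (1 - sig_f) \<and> infnorm (hh k0) \<le> 1 \<and> infnorm (dh k0) \<le> d_max)
     \<longrightarrow> (\<forall>k\<ge>k0. infnorm (ch k) \<le> sig_i * sig_c / (1 - sig_f) \<and> infnorm (hh k) \<le> 1
                      \<and> infnorm (dh k) \<le> d_max)"
proof -
  define inv where "inv k \<longleftrightarrow> infnorm (ch k) \<le> sig_i * sig_c / (1 - sig_f)
    \<and> infnorm (hh k) \<le> 1 \<and> infnorm (dh k) \<le> d_max" for k
  have "0 \<le> d_max"
    using d_in[of 0] infnorm_pos_le order_trans by blast
  have step: "inv (Suc k)" if "inv k" for k
  proof -
    have gates: "infnorm (W *v u k + U *v hh k + b + L *v (y k - yh k))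
        \<le> mat_infnorm (hcat (hcat (hcat (hcat (u_max *\<^sub>R W) (U - L ** W_y)) (col b)) (L ** W_y))
             ((2 * d_max) *\<^sub>R L))"
      for W :: "real^'m^'n" and U and b and L :: "real^'p^'n"
      unfolding y_def yh_def
      by (rule infnorm_observer_gate_le[OF u_in _ h_in d_in]) (use that inv_def in auto)
    have "infnorm (ch (Suc k)) \<le> sig_i * sig_c / (1 - sig_f)"
      unfolding obs_c sig_i_def sig_c_def sig_f_def
      by (rule infnorm_lstm_cell_update_le[OF gates gates infnorm_affine_le_mat_infnorm_hcat[OF u_in]])
        (use that in \<open>auto simp: inv_def sig_i_def sig_c_def sig_f_def\<close>)
    moreover have "infnorm (hh (Suc k)) \<le> 1"
      unfolding obs_h by (rule infnorm_lstm_hidden_le)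
    moreover have "infnorm (dh (Suc k)) \<le> d_max"
      unfolding obs_d using \<open>0 \<le> d_max\<close> by (rule infnorm_sat_le)
    ultimately show ?thesis
      unfolding inv_def by blast
  qed
  have "inv k" if "k0 \<le> k" and "inv k0" for k0 k
    using that(1) by (induction k rule: dec_induct) (use that(2) step in auto)
  then show ?thesis
    unfolding inv_def by blast
qed

end
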